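(* Assume that $\xi_p\in F$; that if $p=2$ and $n=1$ then $-1\in N_{K/F}(K^\times)$; and that we are not in the case ($p=2$ and $\omega=1<\nu$). Suppose $\nu=\infty$. Then for every $m\ge1$, $((-\infty,\dots,-\infty),1)$ is a minimal norm pair of length $m$ for $K/F$.
   Context: Let $p$ be a prime, $n\ge1$, and $K/F$ a cyclic Galois extension of degree $p^n$ with $\mathrm{char}(K)\neq p$; $G=\mathrm{Gal}(K/F)=\langle\sigma\rangle$. For $0\le i\le n$ let $K_i$ be the intermediate field with $[K_i:F]=p^i$. For $k\ge1$, $\xi_{p^k}$ denotes a primitive $p^k$-th root of unity and $\mu_{p^k}$ the group of $p^k$-th roots of unity. Put $\omega=\infty$ if $\mu_{p^k}\subseteq F$ for all $k$, otherwise $\omega$ is the integer with $\mu_{p^\omega}\subseteq F$, $\mu_{p^{\omega+1}}\not\subseteq F$; define $\nu$ the same way with $K$ in place of $F$. $U_i=1+p^i\mathbb Z$, $v_p$ the $p$-adic valuation. Conventions: $-\infty$ is smaller than every integer, $p^{-\infty}=0$. Norm pair: for $m\ge1$, a pair $(\mathbf a,d)$ with $\mathbf a=(a_0,\dots,a_{m-1})\in\{-\infty,0,1,\dots,n\}^m$, $a_0<n$, and $d\in U_1$ is a norm pair of length $m$ if there exist $\alpha,\delta_m\in K^\times$ and $\delta_i\in K_{a_i}^\times$ for $0\le i<m$ (with $\delta_i=1$ when $a_i=-\infty$) such that $\sigma(\alpha)=\alpha^d\delta_0\delta_1^p\cdots\delta_m^{p^m}$ and $\xi_p=N_{K/F}(\alpha)^{(d-1)/p}\,N_{K_{n-1}/F}(\delta_0)\prod_{i=1}^m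 N_{K/F}(\delta_i)^{p^{i-1}}$ for a fixed primitive $p$-th root of unity $\xi_p$. Order: $(\mathbf a,d)\le(\mathbf a',d')$ if $\mathbf a<\mathbf a'$ lexicographically, or $\mathbf a=\mathbf a'$ and $\min\{v_p(d'-1),m\}\le\min\{v_p(d-1),m\}$. A norm pair of length $m$ is minimal if it is $\le$ every norm pair of length $m$. *)

theory Defs
  imports "HOL-Number_Theory.Number_Theory" "HOL-Library.Extended_Nat"
begin

(* The cyclic Galois extension K/F of degree p^n with Gal(K/F) = <sigma> is modelled
   (via Artin's theorem) by a field K (the type 'a), a field automorphism sigma of K of
   order exactly p^n, and F = fixed field of sigma.  K_i is the fixed field of sigma^(p^i). *)

definition fixfield :: "('a \<Rightarrow> 'a) \<Rightarrow> nat \<Rightarrow> 'a set" where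
  "fixfield \<sigma> k = {x. (\<sigma> ^^ k) x = x}"

(* relative norm N_{K_i/F}(x) = prod_{j < [K_i:F]} sigma^j(x), for x in K_i *)
definition normK :: "('a::comm_monoid_mult \<Rightarrow> 'a) \<Rightarrow> nat \<Rightarrow> 'a \<Rightarrow> 'a" where
  "normK \<sigma> N x = (\<Prod>j<N. (\<sigma> ^^ j) x)"

definition is_field_automorphism :: "('a::field \<Rightarrow> 'a) \<Rightarrow> bool" where
  "is_field_automorphism \<sigma> \<longleftrightarrow> bij \<sigma> \<and> (\<forall>x y. \<sigma> (x + y) = \<sigma> x + \<sigma> y)
      \<and> (\<forall>x y. \<sigma> (x * y) = \<sigma> x * \<sigma> y) \<and> \<sigma> 1 = 1"

definition contains_mu :: "nat \<Rightarrow> 'a::field set \<Rightarrow> nat \<Rightarrow> bool" where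
  "contains_mu p S k \<longleftrightarrow> (\<exists>z\<in>S. z ^ (p ^ k) = 1 \<and> (\<forall>j. 0 < j \<and> j < p ^ k \<longrightarrow> z ^ j \<noteq> 1))"

(* omega (for S = F) resp. nu (for S = K) *)
definition mu_level :: "nat \<Rightarrow> 'a::field set \<Rightarrow> enat" where
  "mu_level p S = (if \<forall>k. contains_mu p S k then \<infinity>
                   else enat (GREATEST k. contains_mu p S k))"

(* entries of the vector a: None = -infinity, Some k = k *)
definition ext_val :: "nat option \<Rightarrow> int" where
  "ext_val x = (case x of None \<Rightarrow> -1 | Some k \<Rightarrow> int k)"

definition lex_less :: "nat option list \<Rightarrow> nat option list \<Rightarrow> bool" where
  "lex_less xs ys \<longleftrightarrow> (\<exists>i < length xs. take i xs = take i ys \<and> ext_val (xs ! i) < ext_val (ys ! i))"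

definition norm_pair ::
  "('a::field \<Rightarrow> 'a) \<Rightarrow> nat \<Rightarrow> nat \<Rightarrow> 'a \<Rightarrow> nat \<Rightarrow> nat option list \<Rightarrow> int \<Rightarrow> bool" where
  "norm_pair \<sigma> p n \<xi> m a d \<longleftrightarrow>
     m \<ge> 1 \<and> length a = m \<and> ext_val (a ! 0) < int n
     \<and> (\<forall>i<m. case a ! i of None \<Rightarrow> True | Some k \<Rightarrow> k \<le> n)
     \<and> [d = 1] (mod int p)
     \<and> (\<exists>(\<alpha>::'a) (\<delta>::nat \<Rightarrow> 'a).
          \<alpha> \<noteq> 0 \<and> \<delta> m \<noteq> 0
          \<and> (\<forall>i<m. case a ! i of None \<Rightarrow> \<delta> i = 1
                               | Some k \<Rightarrow> \<delta> i \<noteq> 0 \<and> \<delta> i \<in> fixfield \<sigma> (p ^ k))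
          \<and> \<sigma> \<alpha> = \<alpha> powi d * (\<Prod>i\<le>m. \<delta> i ^ (p ^ i))
          \<and> \<xi> = normK \<sigma> (p ^ n) \<alpha> powi ((d - 1) div int p)
                 * normK \<sigma> (p ^ (n - 1)) (\<delta> 0)
                 * (\<Prod>i\<in>{1..m}. normK \<sigma> (p ^ n) (\<delta> i) ^ (p ^ (i - 1))))"

definition vp_min :: "nat \<Rightarrow> nat \<Rightarrow> int \<Rightarrow> nat" where
  "vp_min p m x = (if x = 0 then m else min (multiplicity (int p) x) m)"

definition np_le :: "nat \<Rightarrow> nat \<Rightarrow> nat option list \<Rightarrow> int \<Rightarrow> nat option list \<Rightarrow> int \<Rightarrow> bool" where
  "np_le p m a d a' d' \<longleftrightarrow> lex_less a a' \<or> (a = a' \<and> vp_min p m (d' - 1) \<le> vp_min p m (d - 1))"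

definition minimal_norm_pair ::
  "('a::field \<Rightarrow> 'a) \<Rightarrow> nat \<Rightarrow> nat \<Rightarrow> 'a \<Rightarrow> nat \<Rightarrow> nat option list \<Rightarrow> int \<Rightarrow> bool" where
  "minimal_norm_pair \<sigma> p n \<xi> m a d \<longleftrightarrow>
     norm_pair \<sigma> p n \<xi> m a d \<and> (\<forall>a' d'. norm_pair \<sigma> p n \<xi> m a' d' \<longrightarrow> np_le p m a d a' d')"

end

theory Submission
  imports Defs "HOL-Computational_Algebra.Polynomial"
begin

(* The vector (-\<infinity>, ..., -\<infinity>) is the least possible one, so it suffices to exhibit a norm
   pair with it and d = 1: that is, \<alpha> \<noteq> 0 and \<delta> with \<sigma>(\<alpha>) = \<alpha> \<delta>^(p^m) and
   N(\<delta>)^(p^(m-1)) = \<xi>.  We take \<delta> in F with \<delta>^(p^(n+m-1)) = \<xi> and \<gamma> = \<delta>^(p^m) a primitive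
   p^n-th root of unity.  Such a \<delta> exists because K contains all p-power roots of unity: \<sigma>
   acts on them by z \<mapsto> z^c with c \<equiv> 1 modulo p (modulo 4 if p = 2), as \<xi> (a primitive 4th
   root of unity, since \<omega> \<noteq> 1) lies in F, and lifting the exponent turns c^(p^n) \<equiv> 1 mod p^T
   into c \<equiv> 1 mod p^(T-n), so z^(p^n) lies in F.  Finally \<gamma> is an eigenvalue of \<sigma>: decompose K
   into eigenspaces of \<sigma>; if \<gamma> were no eigenvalue, neither would any \<gamma>^k with p not dividing
   k be, and \<sigma>^(p^(n-1)) would be the identity. *)

section \<open>Lifting the exponent\<close>

lemma binomial_tail_dvd:
  fixes p :: nat and x :: int
  assumes p: "prime p" and j: "j \<ge> 1" and j2: "p = 2 \<longrightarrow> j \<ge> 2" and d: "int p ^ j dvd x"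
  shows "int p ^ (j + 2) dvd (\<Sum>k\<in>{2..p}. of_nat (p choose k) * x ^ k)"
proof (rule dvd_sum)
  fix k assume k: "k \<in> {2..p}"
  obtain y where y: "x = int p ^ j * y" using d by blast
  have xk: "x ^ k = int p ^ (j * k) * y ^ k" unfolding y by (simp add: power_mult_distrib power_mult)
  show "int p ^ (j + 2) dvd of_nat (p choose k) * x ^ k"
  proof (cases "k = p")
    case True
    have "j + 2 \<le> j * p"
    proof (cases "p = 2")
      case False
      then have "j * 3 \<le> j * p" using prime_ge_2_nat[OF p] by simp
      then show ?thesis using j by linarith
    qed (use j2 in simp)
    then have "int p ^ (j + 2) dvd int p ^ (j * k)" using True by (intro le_imp_power_dvd) simp
    then show ?thesis unfolding xk by simp
  next
    case False
    then have "int p dvd of_nat (p choose k)"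
      using k p dvd_choose_prime by (auto simp: int_dvd_int_iff)
    moreover have "int p ^ (j + 1) dvd int p ^ (j * k)"
    proof (intro le_imp_power_dvd)
      have "j * 2 \<le> j * k" using k by simp
      then show "j + 1 \<le> j * k" using j by linarith
    qed
    ultimately have "int p * int p ^ (j + 1) dvd of_nat (p choose k) * int p ^ (j * k)"
      by (rule mult_dvd_mono)
    then have "int p ^ (j + 2) dvd of_nat (p choose k) * int p ^ (j * k)" by simp
    then show ?thesis unfolding xk by (metis dvd_mult2 mult.assoc)
  qed
qed

lemma lifting_exponent_step:
  fixes p :: nat and x :: int
  assumes p: "prime p" and j: "j \<ge> 1" and j2: "p = 2 \<longrightarrow> j \<ge> 2"
    and d: "int p ^ j dvd x" and nd: "\<not> int p ^ (j + 1) dvd x"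
  shows "int p ^ (j + 1) dvd (1 + x) ^ p - 1 \<and> \<not> int p ^ (j + 2) dvd (1 + x) ^ p - 1"
proof -
  have "{..p} = {0, 1} \<union> {2..p}" using prime_ge_2_nat[OF p] by auto
  then have "(1 + x) ^ p = (\<Sum>k\<in>{0, 1} \<union> {2..p}. of_nat (p choose k) * x ^ k)"
    using binomial_ring[of x 1 p] by (simp add: add.commute)
  also have "\<dots> = 1 + int p * x + (\<Sum>k\<in>{2..p}. of_nat (p choose k) * x ^ k)"
    by (subst sum.union_disjoint) auto
  finally have expand: "(1 + x) ^ p - 1 = int p * x + (\<Sum>k\<in>{2..p}. of_nat (p choose k) * x ^ k)"
    by simp
  have tail: "int p ^ (j + 2) dvd (\<Sum>k\<in>{2..p}. of_nat (p choose k) * x ^ k)"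
    using binomial_tail_dvd[OF p j j2 d] .
  have "int p ^ (j + 1) dvd int p * x" using d by (simp add: mult_dvd_mono)
  moreover have "int p ^ (j + 1) dvd (\<Sum>k\<in>{2..p}. of_nat (p choose k) * x ^ k)"
    using tail by (rule dvd_trans[rotated]) (simp add: le_imp_power_dvd)
  moreover have "\<not> int p ^ (j + 2) dvd int p * x"
    using nd prime_gt_0_nat[OF p] by simp
  ultimately show ?thesis
    unfolding expand using dvd_add dvd_add_left_iff[OF tail] by simp
qed

lemma lifting_exponent_iterate:
  fixes p :: nat and x :: int
  assumes p: "prime p" and j: "j \<ge> 1" and j2: "p = 2 \<longrightarrow> j \<ge> 2"
    and d: "int p ^ j dvd x" and nd: "\<not> int p ^ (j + 1) dvd x"
  shows "\<not> int p ^ (j + i + 1) dvd (1 + x) ^ (p ^ i) - 1"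
proof -
  have "int p ^ (j + i) dvd (1 + x) ^ (p ^ i) - 1 \<and> \<not> int p ^ (j + i + 1) dvd (1 + x) ^ (p ^ i) - 1"
  proof (induction i)
    case (Suc i)
    define y where "y = (1 + x) ^ (p ^ i) - 1"
    have "(1 + x) ^ (p ^ Suc i) = (1 + y) ^ p"
      unfolding y_def by (simp add: power_mult[symmetric] mult.commute)
    then show ?case
      using lifting_exponent_step[OF p, of "j + i" y] Suc j j2 by (auto simp: y_def)
  qed (use d nd in simp)
  then show ?thesis ..
qed

lemma lifting_exponent:
  fixes p :: nat and x :: int
  assumes p: "prime p" and j: "j \<ge> 1" and j2: "p = 2 \<longrightarrow> j \<ge> 2"
    and d: "int p ^ j dvd x" and T: "int p ^ T dvd (1 + x) ^ (p ^ n) - 1"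
  shows "int p ^ (T - n) dvd x"
proof (rule ccontr)
  assume nd: "\<not> int p ^ (T - n) dvd x"
  then have x0: "x \<noteq> 0" by auto
  have nu: "\<not> is_unit (int p)" using p by (metis not_prime_unit prime_nat_int_transfer)
  define v where "v = multiplicity (int p) x"
  have v1: "int p ^ v dvd x" unfolding v_def by (rule multiplicity_dvd)
  have v2: "\<not> int p ^ (v + 1) dvd x"
    using multiplicity_geI[OF x0 nu, of "v + 1"] v_def by auto
  have jv: "j \<le> v" using multiplicity_geI[OF x0 nu d] v_def by simp
  have "\<not> T - n \<le> v" using nd v1 le_imp_power_dvd dvd_trans by blast
  then have "int p ^ (v + n + 1) dvd int p ^ T" by (intro le_imp_power_dvd) simp
  moreover have "\<not> int p ^ (v + n + 1) dvd (1 + x) ^ (p ^ n) - 1"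
    using lifting_exponent_iterate[OF p, of v x n] j jv j2 v1 v2 by auto
  ultimately show False using T dvd_trans by blast
qed

section \<open>Roots of unity\<close>

definition primitive_root :: "'a::idom \<Rightarrow> nat \<Rightarrow> bool" where
  "primitive_root w M \<longleftrightarrow> w ^ M = 1 \<and> (\<forall>j. 0 < j \<and> j < M \<longrightarrow> w ^ j \<noteq> 1)"

lemma contains_mu_iff: "contains_mu p S k \<longleftrightarrow> (\<exists>z\<in>S. primitive_root z (p ^ k))"
  unfolding contains_mu_def primitive_root_def ..

lemma primitive_root_nonzero: "primitive_root w M \<Longrightarrow> 0 < M \<Longrightarrow> w \<noteq> 0"
  unfolding primitive_root_def by (auto simp: zero_power)

lemma primitive_root_power_mod:
  assumes "primitive_root w M" shows "w ^ a = w ^ (a mod M)"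
proof -
  have "w ^ a = w ^ (M * (a div M) + a mod M)" by simp
  also have "\<dots> = (w ^ M) ^ (a div M) * w ^ (a mod M)" by (simp only: power_add power_mult)
  finally show ?thesis using assms unfolding primitive_root_def by simp
qed

lemma primitive_root_power_eq_iff:
  assumes w: "primitive_root w M" and M: "0 < M"
  shows "w ^ a = w ^ b \<longleftrightarrow> [a = b] (mod M)"
proof
  assume "w ^ a = w ^ b"
  then have eq: "w ^ (a mod M) = w ^ (b mod M)" using primitive_root_power_mod[OF w] by metis
  have no_collision: False if "u < v" "v < M" "w ^ u = w ^ v" for u v
  proof -
    have "w ^ v = w ^ u * w ^ (v - u)" using \<open>u < v\<close> by (simp flip: power_add)
    then have "w ^ u * w ^ (v - u) = w ^ u * 1" using \<open>w ^ u = w ^ v\<close> by simp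
    then have "w ^ (v - u) = 1" using primitive_root_nonzero[OF w M] by simp
    then show False using w that unfolding primitive_root_def by auto
  qed
  have "a mod M < M" "b mod M < M" using M by simp_all
  then have "a mod M = b mod M"
    using eq no_collision[of "a mod M" "b mod M"] no_collision[of "b mod M" "a mod M"]
    by (cases "a mod M" "b mod M" rule: linorder_cases) simp_all
  then show "[a = b] (mod M)" unfolding cong_def .
qed (use primitive_root_power_mod[OF w] in \<open>metis cong_def\<close>)

lemma primitive_root_power_eq_one_iff:
  "primitive_root w M \<Longrightarrow> 0 < M \<Longrightarrow> w ^ a = 1 \<longleftrightarrow> M dvd a"
  using primitive_root_power_eq_iff[of w M a 0] by (simp add: cong_0_iff)

lemma primitive_root_power:
  assumes w: "primitive_root w (p ^ k)" and i: "i \<le> k" and p: "0 < p"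
  shows "primitive_root (w ^ (p ^ (k - i))) (p ^ i)"
proof -
  have pk: "p ^ (k - i) * p ^ i = p ^ k" using i by (simp add: power_add[symmetric])
  have "(w ^ p ^ (k - i)) ^ j = 1 \<longleftrightarrow> p ^ (k - i) * p ^ i dvd p ^ (k - i) * j" for j
    using primitive_root_power_eq_one_iff[OF w, of "p ^ (k - i) * j"] p pk by (simp add: power_mult)
  then have "(w ^ p ^ (k - i)) ^ j = 1 \<longleftrightarrow> p ^ i dvd j" for j
    using p by simp
  then show ?thesis unfolding primitive_root_def by (auto dest: dvd_imp_le)
qed

lemma primitive_root_power_iff:
  assumes w: "primitive_root w M" and M: "0 < M"
  shows "primitive_root (w ^ e) M \<longleftrightarrow> coprime e M"
proof
  assume we: "primitive_root (w ^ e) M"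
  define g where "g = gcd e M"
  have "g dvd e" "g dvd M" by (simp_all add: g_def)
  then obtain a b where ab: "e = g * a" "M = g * b" by (auto elim!: dvdE)
  have "(w ^ e) ^ b = (w ^ M) ^ a"
    unfolding ab by (simp only: power_mult[symmetric]) (simp add: mult_ac)
  then have "(w ^ e) ^ b = 1" using w by (simp add: primitive_root_def)
  moreover have "0 < b" using M ab by simp
  ultimately have "\<not> b < M" using we unfolding primitive_root_def by blast
  moreover have "b < M" if "g \<noteq> 1"
  proof -
    have "g \<noteq> 0" using M ab by auto
    then have "Suc 0 < g" using that by linarith
    then show ?thesis unfolding ab(2) by (rule n_less_m_mult_n[OF \<open>0 < b\<close>])
  qed
  ultimately have "g = 1" by blast
  then show "coprime e M" unfolding g_def by (rule gcd_eq_1_imp_coprime)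
next
  assume "coprime e M"
  then have power_one: "(w ^ e) ^ j = 1 \<longleftrightarrow> M dvd j" for j
    using primitive_root_power_eq_one_iff[OF w M, of "e * j"]
    by (simp add: power_mult coprime_dvd_mult_right_iff coprime_commute)
  have "(w ^ e) ^ j \<noteq> 1" if "0 < j" "j < M" for j
    using power_one[of j] nat_dvd_not_less[OF that] by blast
  then show "primitive_root (w ^ e) M"
    unfolding primitive_root_def using power_one by simp
qed

text \<open>A primitive \<open>M\<close>-th root of unity already provides \<open>M\<close> distinct roots of \<open>X\<^sup>M - 1\<close>,
  which has no more than \<open>M\<close> roots.\<close>

lemma root_of_unity_is_power:
  assumes w: "primitive_root w M" and M: "0 < M" and y: "y ^ M = 1"
  shows "\<exists>e<M. y = w ^ e"
proof -
  define P :: "'a poly" where "P = monom 1 M - 1"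
  have "coeff P M = 1" using M by (simp add: P_def coeff_monom)
  then have P0: "P \<noteq> 0" by auto
  have "degree P \<le> M" unfolding P_def
    by (rule order.trans[OF degree_diff_le_max]) (auto simp: degree_monom_le)
  then have card_roots: "card {x. poly P x = 0} \<le> M"
    using card_poly_roots_bound[OF P0] by linarith
  have roots: "{x. poly P x = 0} = {x::'a. x ^ M = 1}" by (auto simp: P_def poly_monom)
  have finite_roots: "finite {x::'a. x ^ M = 1}" using poly_roots_finite[OF P0] roots by simp
  have "inj_on (\<lambda>e. w ^ e) {..<M}"
    by (rule inj_onI) (auto simp: primitive_root_power_eq_iff[OF w M] cong_def)
  then have card_powers: "card ((\<lambda>e. w ^ e) ` {..<M}) = M" by (simp add: card_image)
  have "(w ^ e) ^ M = 1" for e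
    using w unfolding primitive_root_def by (metis mult.commute power_mult power_one)
  then have "(\<lambda>e. w ^ e) ` {..<M} \<subseteq> {x. x ^ M = 1}" by auto
  then have "(\<lambda>e. w ^ e) ` {..<M} = {x. x ^ M = 1}"
    using card_roots card_powers roots by (intro card_seteq[OF finite_roots]) simp_all
  then show ?thesis using y by auto
qed

lemma sum_powers_root_of_unity:
  fixes x :: "'a::field"
  assumes "x ^ N = 1" and "x \<noteq> 1"
  shows "(\<Sum>k<N. x ^ k) = 0"
  using geometric_sum[OF assms(2), of N] assms(1) by simp

locale field_endomorphism =
  fixes \<sigma> :: "'a::field \<Rightarrow> 'a"
  assumes hom_add: "\<sigma> (x + y) = \<sigma> x + \<sigma> y"
    and hom_mult: "\<sigma> (x * y) = \<sigma> x * \<sigma> y"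
    and hom_one: "\<sigma> 1 = 1"
begin

lemma hom_zero: "\<sigma> 0 = 0"
  using hom_add[of 0 0] add_cancel_right_right[of "\<sigma> 0" "\<sigma> 0"] by simp

lemma hom_power: "\<sigma> (x ^ k) = \<sigma> x ^ k"
  by (induction k) (simp_all add: hom_one hom_mult)

lemma hom_inverse: "\<sigma> (inverse x) = inverse (\<sigma> x)"
proof (cases "x = 0")
  case False
  then have "\<sigma> x * \<sigma> (inverse x) = 1" by (simp flip: hom_mult add: hom_one)
  then show ?thesis by (metis inverse_unique)
qed (simp add: hom_zero)

lemma hom_sum: "\<sigma> (sum g A) = (\<Sum>a\<in>A. \<sigma> (g a))"
  by (induction A rule: infinite_finite_induct) (simp_all add: hom_zero hom_add)

lemma hom_of_nat: "\<sigma> (of_nat n) = of_nat n"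
  by (induction n) (simp_all add: hom_zero hom_one hom_add)

lemma funpow: "field_endomorphism (\<sigma> ^^ j)"
proof
  show "(\<sigma> ^^ j) (x + y) = (\<sigma> ^^ j) x + (\<sigma> ^^ j) y" for x y
    by (induction j) (simp_all add: hom_add)
  show "(\<sigma> ^^ j) (x * y) = (\<sigma> ^^ j) x * (\<sigma> ^^ j) y" for x y
    by (induction j) (simp_all add: hom_mult)
  show "(\<sigma> ^^ j) 1 = 1"
    by (induction j) (simp_all add: hom_one)
qed

end

lemma field_endomorphism_if_automorphism:
  "is_field_automorphism \<sigma> \<Longrightarrow> field_endomorphism \<sigma>"
  unfolding is_field_automorphism_def by unfold_locales blast+

lemma funpow_fixed: "f x = x \<Longrightarrow> (f ^^ j) x = x"
  by (induction j) simp_all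

section \<open>Eigenvectors of a root-of-unity eigenvalue\<close>

locale root_of_unity_eigenspaces = field_endomorphism \<sigma> for \<sigma> :: "'a::field \<Rightarrow> 'a" +
  fixes N :: nat and \<gamma> :: 'a
  assumes N_pos: "0 < N" and period: "\<sigma> ^^ N = id"
    and primitive: "primitive_root \<gamma> N" and fixed_root: "\<sigma> \<gamma> = \<gamma>"
begin

text \<open>\<open>component k \<theta>\<close> is \<open>N\<close> times the projection of \<open>\<theta>\<close> onto the \<open>\<gamma>\<^sup>k\<close>-eigenspace of \<open>\<sigma>\<close>.\<close>

definition component :: "nat \<Rightarrow> 'a \<Rightarrow> 'a" where
  "component k \<theta> = (\<Sum>j<N. inverse \<gamma> ^ (k * j) * (\<sigma> ^^ j) \<theta>)"

lemma component_eigen: "\<sigma> (component k \<theta>) = \<gamma> ^ k * component k \<theta>"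
proof -
  define f where "f j = inverse \<gamma> ^ (k * j) * (\<sigma> ^^ j) \<theta>" for j
  have \<gamma>_nonzero: "\<gamma> \<noteq> 0" using primitive_root_nonzero[OF primitive N_pos] .
  have shift: "\<sigma> (f j) = \<gamma> ^ k * f (Suc j)" for j
  proof -
    have "\<gamma> ^ k * inverse \<gamma> ^ (k * Suc j) = (\<gamma> * inverse \<gamma>) ^ k * inverse \<gamma> ^ (k * j)"
      by (simp add: power_add power_mult_distrib mult.assoc)
    also have "\<dots> = inverse \<gamma> ^ (k * j)" using \<gamma>_nonzero by simp
    finally show ?thesis
      unfolding f_def by (simp add: hom_mult hom_power hom_inverse fixed_root mult.assoc[symmetric])
  qed
  have "inverse \<gamma> ^ (k * N) = inverse ((\<gamma> ^ N) ^ k)"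
    by (metis mult.commute power_inverse power_mult)
  then have "f N = f 0" unfolding f_def using period primitive by (simp add: primitive_root_def)
  then have rotate: "(\<Sum>j<N. f (Suc j)) = (\<Sum>j<N. f j)"
    using sum.lessThan_Suc_shift[of f N] sum.lessThan_Suc[of f N] by (simp add: add.commute)
  have "\<sigma> (component k \<theta>) = (\<Sum>j<N. \<sigma> (f j))" unfolding component_def f_def by (simp add: hom_sum)
  also have "\<dots> = \<gamma> ^ k * (\<Sum>j<N. f (Suc j))" by (simp add: shift sum_distrib_left)
  also have "\<dots> = \<gamma> ^ k * component k \<theta>" using rotate unfolding component_def f_def by simp
  finally show ?thesis .
qed

lemma funpow_component: "(\<sigma> ^^ i) (component k \<theta>) = \<gamma> ^ (k * i) * component k \<theta>"
  by (induction i) (simp_all add: component_eigen hom_mult hom_power fixed_root power_add mult_ac)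

lemma sum_component: "(\<Sum>k<N. component k \<theta>) = of_nat N * \<theta>"
proof -
  have "(\<Sum>k<N. component k \<theta>) = (\<Sum>j<N. \<Sum>k<N. inverse \<gamma> ^ (k * j) * (\<sigma> ^^ j) \<theta>)"
    unfolding component_def by (rule sum.swap)
  also have "\<dots> = (\<Sum>j<N. (\<Sum>k<N. (inverse \<gamma> ^ j) ^ k) * (\<sigma> ^^ j) \<theta>)"
    unfolding sum_distrib_right by (intro sum.cong refl) (metis mult.commute power_mult)
  also have "\<dots> = (\<Sum>j<N. if j = 0 then of_nat N * \<theta> else 0)"
  proof (rule sum.cong[OF refl])
    fix j assume j: "j \<in> {..<N}"
    have "(inverse \<gamma> ^ j) ^ N = inverse ((\<gamma> ^ N) ^ j)"
      by (metis mult.commute power_inverse power_mult)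
    moreover have "j \<noteq> 0 \<Longrightarrow> inverse \<gamma> ^ j \<noteq> 1"
      using primitive j by (auto simp: primitive_root_def power_inverse)
    ultimately show "(\<Sum>k<N. (inverse \<gamma> ^ j) ^ k) * (\<sigma> ^^ j) \<theta> = (if j = 0 then of_nat N * \<theta> else 0)"
      using primitive sum_powers_root_of_unity[of "inverse \<gamma> ^ j" N] by (simp add: primitive_root_def)
  qed
  also have "\<dots> = of_nat N * \<theta>" using N_pos by simp
  finally show ?thesis .
qed

lemma eigenvector_of_coprime_power:
  assumes no_eigenvector: "\<And>\<alpha>. \<sigma> \<alpha> = \<gamma> * \<alpha> \<Longrightarrow> \<alpha> = 0"
    and "coprime k N" and x: "\<sigma> x = \<gamma> ^ k * x"
  shows "x = 0"
proof -
  obtain u where "[k * u = 1] (mod N)" using cong_solve_coprime_nat[OF \<open>coprime k N\<close>] by auto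
  then have "\<gamma> ^ (k * u) = \<gamma>" using primitive_root_power_eq_iff[OF primitive N_pos, of "k * u" 1] by simp
  then have "\<sigma> (x ^ u) = \<gamma> * x ^ u"
    using x by (simp add: hom_power power_mult_distrib power_mult)
  then have "x ^ u = 0" by (rule no_eigenvector)
  then show ?thesis by simp
qed

theorem eigenvector_exists:
  assumes p: "prime p" and N: "N = p ^ n" and not_id: "\<sigma> ^^ (p ^ (n - 1)) \<noteq> id"
    and char: "of_nat p \<noteq> (0::'a)"
  shows "\<exists>\<alpha>. \<alpha> \<noteq> 0 \<and> \<sigma> \<alpha> = \<gamma> * \<alpha>"
proof (rule ccontr)
  assume "\<not> ?thesis"
  then have no_eigenvector: "\<And>\<alpha>. \<sigma> \<alpha> = \<gamma> * \<alpha> \<Longrightarrow> \<alpha> = 0" by blast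
  define q where "q = p ^ (n - 1)"
  have n: "n \<ge> 1" using N_pos not_id N period by (cases n) auto
  interpret q: field_endomorphism "\<sigma> ^^ q" by (rule funpow)
  have fixed: "(\<sigma> ^^ q) (component k \<theta>) = component k \<theta>" for k \<theta>
  proof (cases "p dvd k")
    case True
    then obtain r where "k = p * r" ..
    moreover have "p * q = N" using n unfolding N q_def by (cases n) simp_all
    ultimately have "N dvd k * q" by (metis dvd_triv_left mult.commute mult.left_commute)
    then show ?thesis
      using primitive_root_power_eq_one_iff[OF primitive N_pos] funpow_component by simp
  next
    case False
    then have "coprime p k" using p by (simp add: prime_imp_coprime)
    then have "coprime k N" unfolding N by (simp add: coprime_commute)
    then show ?thesis
      using eigenvector_of_coprime_power[OF no_eigenvector _ component_eigen] q.hom_zero by simp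
  qed
  have "of_nat N * (\<sigma> ^^ q) \<theta> = of_nat N * \<theta>" for \<theta>
  proof -
    have "of_nat N * (\<sigma> ^^ q) \<theta> = (\<sigma> ^^ q) (\<Sum>k<N. component k \<theta>)"
      by (simp add: q.hom_mult q.hom_of_nat sum_component)
    also have "\<dots> = of_nat N * \<theta>" unfolding q.hom_sum fixed by (rule sum_component)
    finally show ?thesis .
  qed
  then have "\<sigma> ^^ q = id" using char unfolding N by (auto simp: of_nat_power)
  with not_id show False unfolding q_def by simp
qed

end

section \<open>Fixed roots of unity\<close>

context field_endomorphism
begin

lemma fixed_power_exponent:
  assumes z: "primitive_root z (p ^ T)" and p: "0 < p" and sz: "\<sigma> z = z ^ c" and s: "s \<le> T"
    and fixed: "\<sigma> (z ^ (p ^ (T - s) * e)) = z ^ (p ^ (T - s) * e)"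
  shows "int p ^ s dvd int e * (int c - 1)"
proof -
  define a where "a = p ^ (T - s) * e"
  have "z ^ (c * a) = z ^ a" using fixed sz by (simp add: a_def hom_power power_mult)
  then have "[c * a = a] (mod p ^ T)" using primitive_root_power_eq_iff[OF z] p by simp
  then have "int (p ^ T) dvd int (c * a) - int a" by (simp add: cong_iff_dvd_diff flip: cong_int_iff)
  moreover have "int (c * a) - int a = int p ^ (T - s) * (int e * (int c - 1))"
    by (simp add: a_def algebra_simps)
  moreover have "int (p ^ T) = int p ^ (T - s) * int p ^ s"
    using s by (simp flip: power_add)
  ultimately show ?thesis using p by simp
qed

lemma exponent_congruence_of_fixed_root:
  assumes p: "prime p" and z: "primitive_root z (p ^ T)" and sz: "\<sigma> z = z ^ c" and s: "s \<le> T"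
    and w: "primitive_root w (p ^ s)" and sw: "\<sigma> w = w"
  shows "int p ^ s dvd int c - 1"
proof -
  have p0: "0 < p" using p prime_gt_0_nat by blast
  have z_s: "primitive_root (z ^ p ^ (T - s)) (p ^ s)" using primitive_root_power[OF z s p0] .
  obtain e where e: "w = (z ^ p ^ (T - s)) ^ e"
    using root_of_unity_is_power[OF z_s] w p0 by (auto simp: primitive_root_def)
  then have "coprime e (p ^ s)" using primitive_root_power_iff[OF z_s] w p0 by simp
  moreover have "int p ^ s dvd int e * (int c - 1)"
    using fixed_power_exponent[OF z p0 sz s, of e] e sw by (simp add: power_mult)
  ultimately show ?thesis
    by (metis coprime_dvd_mult_right_iff coprime_commute of_nat_power coprime_int_iff)
qed

lemma funpow_primitive_root:
  assumes sz: "\<sigma> z = z ^ c" shows "(\<sigma> ^^ j) z = z ^ (c ^ j)"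
  by (induction j) (simp_all add: hom_power sz power_mult mult.commute)

text \<open>Lifting the exponent turns \<open>c\<^bsup>p\<^sup>n\<^esup> \<equiv> 1 (mod p\<^sup>T)\<close> into \<open>c \<equiv> 1 (mod p\<^bsup>T-n\<^esup>)\<close>.\<close>

lemma fixed_power_of_primitive_root:
  assumes p: "prime p" and period: "\<sigma> ^^ (p ^ n) = id"
    and z: "primitive_root z (p ^ T)" and sz: "\<sigma> z = z ^ c" and n: "n \<le> T"
    and j: "j \<ge> 1" and j2: "p = 2 \<longrightarrow> j \<ge> 2" and cj: "int p ^ j dvd int c - 1"
  shows "\<sigma> (z ^ p ^ n) = z ^ p ^ n"
proof -
  have pT: "0 < p ^ T" using p prime_gt_0_nat by simp
  have "z ^ (c ^ p ^ n) = z ^ 1" using funpow_primitive_root[OF sz, of "p ^ n"] period by simp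
  then have "[c ^ p ^ n = 1] (mod p ^ T)" using primitive_root_power_eq_iff[OF z pT] by blast
  then have "int p ^ T dvd (1 + (int c - 1)) ^ p ^ n - 1"
    by (simp add: cong_iff_dvd_diff flip: cong_int_iff)
  then have "int p ^ (T - n) dvd int c - 1" using lifting_exponent[OF p j j2 cj] by blast
  moreover have "int (c * p ^ n) - int (p ^ n) = int p ^ n * (int c - 1)" by (simp add: algebra_simps)
  moreover have "int (p ^ T) = int p ^ n * int p ^ (T - n)" using n by (simp flip: power_add)
  ultimately have "int (p ^ T) dvd int (c * p ^ n) - int (p ^ n)" by simp
  then have "[c * p ^ n = p ^ n] (mod p ^ T)" by (simp add: cong_iff_dvd_diff flip: cong_int_iff)
  then have "z ^ (c * p ^ n) = z ^ p ^ n" using primitive_root_power_eq_iff[OF z pT] by blast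
  then show ?thesis by (simp add: hom_power sz power_mult)
qed

text \<open>The root \<open>\<delta>\<close> is a suitable power of a primitive \<open>p\<^bsup>2n+m\<^esup>\<close>-th root of unity \<open>z\<close>: by the
  previous lemma \<open>z\<^bsup>p\<^sup>n\<^esup>\<close> lies in the fixed field.\<close>

lemma fixed_root_of_xi:
  assumes p: "prime p" and n: "n \<ge> 1" and m: "m \<ge> 1" and period: "\<sigma> ^^ (p ^ n) = id"
    and \<xi>: "primitive_root \<xi> p" and s\<xi>: "\<sigma> \<xi> = \<xi>"
    and all_roots: "\<And>k. \<exists>z::'a. primitive_root z (p ^ k)"
    and fourth_root: "p = 2 \<Longrightarrow> \<exists>i. \<sigma> i = i \<and> primitive_root i 4"
  shows "\<exists>\<delta>. \<sigma> \<delta> = \<delta> \<and> \<delta> ^ p ^ (n + m - 1) = \<xi> \<and> primitive_root (\<delta> ^ p ^ m) (p ^ n)"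
proof -
  define T where "T = n + m + n"
  have p0: "0 < p" using p prime_gt_0_nat by blast
  obtain z :: 'a where z: "primitive_root z (p ^ T)" using all_roots[of T] by blast
  have "\<sigma> z ^ p ^ T = 1" using z by (simp add: primitive_root_def hom_one flip: hom_power)
  then obtain c where sz: "\<sigma> z = z ^ c" using root_of_unity_is_power[OF z] p0 by auto
  define j where "j = (if p = 2 then 2 else (1::nat))"
  have T1: "1 \<le> T" and T2: "2 \<le> T" using n by (simp_all add: T_def)
  have "int p ^ j dvd int c - 1"
  proof (cases "p = 2")
    case True
    then obtain i where "\<sigma> i = i" "primitive_root i (p ^ 2)" using fourth_root by auto
    then show ?thesis
      using exponent_congruence_of_fixed_root[OF p z sz T2] True by (simp add: j_def)
  next
    case False
    then show ?thesis
      using exponent_congruence_of_fixed_root[OF p z sz T1 _ s\<xi>] \<xi> by (simp add: j_def)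
  qed
  then have s_zn: "\<sigma> (z ^ p ^ n) = z ^ p ^ n"
    using fixed_power_of_primitive_root[OF p period z sz, of j] by (simp add: j_def T_def)
  have z1: "primitive_root (z ^ p ^ (T - 1)) (p ^ 1)" using primitive_root_power[OF z T1 p0] .
  obtain e where e: "\<xi> = (z ^ p ^ (T - 1)) ^ e"
    using root_of_unity_is_power[OF z1] \<xi> p0 by (auto simp: primitive_root_def)
  then have e_coprime: "coprime e (p ^ n)"
    using primitive_root_power_iff[OF z1] \<xi> p0 by simp
  define \<delta> where "\<delta> = (z ^ p ^ n) ^ e"
  have "\<sigma> \<delta> = \<delta>" unfolding \<delta>_def by (simp only: hom_power[of "z ^ p ^ n" e] s_zn)
  moreover have "\<delta> ^ p ^ (n + m - 1) = \<xi>"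
  proof -
    have "n + (n + m - 1) = T - 1" using m unfolding T_def by arith
    then have "p ^ n * p ^ (n + m - 1) = p ^ (T - 1)" by (metis power_add)
    then have "p ^ n * e * p ^ (n + m - 1) = p ^ (T - 1) * e" by (metis mult.commute mult.assoc)
    then show ?thesis unfolding \<delta>_def e by (simp only: power_mult[symmetric])
  qed
  moreover have "primitive_root (\<delta> ^ p ^ m) (p ^ n)"
  proof -
    have "n + m \<le> T" by (simp add: T_def)
    then have z_n: "primitive_root (z ^ p ^ (n + m)) (p ^ n)"
      using primitive_root_power[OF z _ p0, of n] by (simp add: T_def)
    have "p ^ n * e * p ^ m = p ^ (n + m) * e" by (simp add: power_add mult_ac)
    then have "\<delta> ^ p ^ m = (z ^ p ^ (n + m)) ^ e"
      unfolding \<delta>_def by (simp only: power_mult[symmetric])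
    then show ?thesis using primitive_root_power_iff[OF z_n] e_coprime p0 by simp
  qed
  ultimately show ?thesis by blast
qed

end

lemma mu_level_eq_one:
  assumes one: "contains_mu p S 1" and not_two: "\<not> contains_mu p S 2" and p: "0 < p"
    and closed: "\<And>x e. x \<in> S \<Longrightarrow> x ^ e \<in> S"
  shows "mu_level p S = 1"
proof -
  have not_higher: "\<not> contains_mu p S k" if "2 \<le> k" for k
  proof
    assume "contains_mu p S k"
    then obtain z where "z \<in> S" "primitive_root z (p ^ k)" by (auto simp: contains_mu_iff)
    then have "z ^ p ^ (k - 2) \<in> S" "primitive_root (z ^ p ^ (k - 2)) (p ^ 2)"
      using closed primitive_root_power[OF _ that p] by auto
    then show False using not_two by (auto simp: contains_mu_iff)
  qed
  have "(GREATEST k. contains_mu p S k) = 1"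
  proof (rule Greatest_equality)
    show "y \<le> 1" if "contains_mu p S y" for y
      using not_higher[of y] that by linarith
  qed (rule one)
  moreover have "\<not> (\<forall>k. contains_mu p S k)" using not_two by blast
  ultimately show ?thesis by (simp add: mu_level_def one_enat_def)
qed

lemma (in field_endomorphism) fixed_primitive_fourth_root:
  assumes "primitive_root \<xi> 2" and "\<sigma> \<xi> = \<xi>" and "mu_level 2 (fixfield \<sigma> 1) \<noteq> 1"
  shows "\<exists>i. \<sigma> i = i \<and> primitive_root i 4"
proof (rule ccontr)
  assume no_root: "\<nexists>i. \<sigma> i = i \<and> primitive_root i 4"
  have "mu_level 2 (fixfield \<sigma> 1) = 1"
  proof (rule mu_level_eq_one)
    show "contains_mu 2 (fixfield \<sigma> 1) 1" using assms by (auto simp: contains_mu_iff fixfield_def)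
    show "\<not> contains_mu 2 (fixfield \<sigma> 1) 2" using no_root by (auto simp: contains_mu_iff fixfield_def)
    show "x ^ e \<in> fixfield \<sigma> 1" if "x \<in> fixfield \<sigma> 1" for x e
      using that by (simp add: fixfield_def hom_power)
  qed simp
  with assms(3) show False ..
qed

section \<open>Norm pairs\<close>

lemma normK_fixed: "\<sigma> x = x \<Longrightarrow> normK \<sigma> N x = x ^ N"
  unfolding normK_def by (simp add: funpow_fixed)

lemma np_le_replicate_None: "length a = m \<Longrightarrow> np_le p m (replicate m None) 1 a d"
proof (cases "a = replicate m None")
  case False
  assume len: "length a = m"
  have "\<exists>i. i < m \<and> a ! i \<noteq> None"
  proof (rule ccontr)
    assume "\<nexists>i. i < m \<and> a ! i \<noteq> None"
    then have "a = replicate m None" using len by (intro nth_equalityI) auto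
    with False show False ..
  qed
  define i where "i = (LEAST i. i < m \<and> a ! i \<noteq> None)"
  have i: "i < m" "a ! i \<noteq> None"
    using LeastI_ex[OF \<open>\<exists>i. i < m \<and> a ! i \<noteq> None\<close>] unfolding i_def by blast+
  have before: "a ! k = None" if "k < i" for k
    using not_less_Least[OF that[unfolded i_def]] i that by auto
  have "take i (replicate m None) = take i a"
    using i len before by (intro nth_equalityI) auto
  then have "lex_less (replicate m None) a"
    using i unfolding lex_less_def by (intro exI[of _ i]) (auto simp: ext_val_def)
  then show ?thesis unfolding np_le_def ..
qed (simp add: np_le_def vp_min_def)

lemma minimal_norm_pair_replicate_None:
  "norm_pair \<sigma> p n \<xi> m (replicate m None) 1 \<Longrightarrow> minimal_norm_pair \<sigma> p n \<xi> m (replicate m None) 1"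
  unfolding minimal_norm_pair_def by (auto simp: norm_pair_def np_le_replicate_None)

text \<open>The witness takes \<open>\<delta>\<^sub>i = 1\<close> for \<open>i < m\<close> and \<open>\<delta>\<^sub>m = \<delta>\<close>; as \<open>\<delta>\<close> lies in \<open>F\<close>, its norm is
  \<open>\<delta>\<^bsup>p\<^sup>n\<^esup>\<close>.\<close>

lemma (in field_endomorphism) norm_pair_replicate_None:
  assumes m: "m \<ge> 1"
    and \<alpha>: "\<alpha> \<noteq> 0" "\<sigma> \<alpha> = \<delta> ^ p ^ m * \<alpha>"
    and \<delta>: "\<delta> \<noteq> 0" "\<sigma> \<delta> = \<delta>" "\<delta> ^ p ^ (n + m - 1) = \<xi>"
  shows "norm_pair \<sigma> p n \<xi> m (replicate m None) 1"
proof -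
  define dl where "dl i = (if i = m then \<delta> else 1)" for i :: nat
  have "(\<Prod>i\<le>m. dl i ^ p ^ i) = (\<Prod>i\<le>m. if i = m then \<delta> ^ p ^ m else 1)"
    by (intro prod.cong) (auto simp: dl_def)
  then have "(\<Prod>i\<le>m. dl i ^ p ^ i) = \<delta> ^ p ^ m" by simp
  moreover have "(\<Prod>i\<in>{1..m}. normK \<sigma> (p ^ n) (dl i) ^ p ^ (i - 1))
      = (\<Prod>i\<in>{1..m}. if i = m then (\<delta> ^ p ^ n) ^ p ^ (m - 1) else 1)"
    by (intro prod.cong) (auto simp: dl_def normK_fixed hom_one \<delta>)
  then have "(\<Prod>i\<in>{1..m}. normK \<sigma> (p ^ n) (dl i) ^ p ^ (i - 1)) = (\<delta> ^ p ^ n) ^ p ^ (m - 1)"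
    using m by simp
  moreover have "(\<delta> ^ p ^ n) ^ p ^ (m - 1) = \<xi>"
    using m \<delta> by (simp flip: power_mult power_add)
  moreover have "dl 0 = 1" using m by (simp add: dl_def)
  ultimately show ?thesis
    unfolding norm_pair_def using m \<alpha> \<delta>
    by (intro conjI exI[of _ \<alpha>] exI[of _ dl]) (simp_all add: ext_val_def dl_def normK_fixed hom_one mult.commute)
qed

theorem proposition3p1:
  fixes \<sigma> :: "'a::field \<Rightarrow> 'a" and p n :: nat and \<xi> :: 'a
  assumes "prime p" and "n \<ge> 1"
    and "is_field_automorphism \<sigma>"
    and "(\<sigma> ^^ (p ^ n)) = id" and "\<forall>j. 0 < j \<and> j < p ^ n \<longrightarrow> (\<sigma> ^^ j) \<noteq> id"
    and "of_nat p \<noteq> (0::'a)"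
    and "\<xi> ^ p = 1" and "\<forall>j. 0 < j \<and> j < p \<longrightarrow> \<xi> ^ j \<noteq> 1" and "\<xi> \<in> fixfield \<sigma> 1"
    and "p = 2 \<and> n = 1 \<longrightarrow> (\<exists>x. x \<noteq> 0 \<and> normK \<sigma> (p ^ n) x = -1)"
    and "\<not> (p = 2 \<and> mu_level p (fixfield \<sigma> 1) = 1 \<and> 1 < mu_level p (UNIV :: 'a set))"
    and "mu_level p (UNIV :: 'a set) = \<infinity>"
  shows "\<forall>m\<ge>1. minimal_norm_pair \<sigma> p n \<xi> m (replicate m None) 1"
proof (intro allI impI)
  fix m :: nat assume m: "m \<ge> 1"
  interpret field_endomorphism \<sigma> using assms(3) by (rule field_endomorphism_if_automorphism)
  have \<xi>: "primitive_root \<xi> p" "\<sigma> \<xi> = \<xi>"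
    using assms(7-9) by (simp_all add: primitive_root_def fixfield_def)
  have all_roots: "\<exists>z::'a. primitive_root z (p ^ k)" for k
    using assms(12) by (auto simp: mu_level_def contains_mu_iff split: if_splits)
  have "p = 2 \<Longrightarrow> \<exists>i. \<sigma> i = i \<and> primitive_root i 4"
    using fixed_primitive_fourth_root \<xi> assms(11,12) by auto
  then obtain \<delta> where \<delta>: "\<sigma> \<delta> = \<delta>" "\<delta> ^ p ^ (n + m - 1) = \<xi>" "primitive_root (\<delta> ^ p ^ m) (p ^ n)"
    using fixed_root_of_xi[OF assms(1,2) m assms(4) \<xi> all_roots] by blast
  have p0: "0 < p" using prime_gt_0_nat[OF assms(1)] .
  then have pn: "0 < p ^ n" by simp
  interpret root_of_unity_eigenspaces \<sigma> "p ^ n" "\<delta> ^ p ^ m"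
    by unfold_locales (simp_all add: p0 assms(4) \<delta> hom_power)
  have "p ^ (n - 1) < p ^ n" using assms(1,2) prime_gt_1_nat by (simp add: power_strict_increasing)
  then obtain \<alpha> where "\<alpha> \<noteq> 0" "\<sigma> \<alpha> = \<delta> ^ p ^ m * \<alpha>"
    using eigenvector_exists[OF assms(1) refl _ assms(6)] assms(5) pn by auto
  moreover have "\<delta> \<noteq> 0" using primitive_root_nonzero[OF \<delta>(3) pn] p0 by auto
  ultimately show "minimal_norm_pair \<sigma> p n \<xi> m (replicate m None) 1"
    using norm_pair_replicate_None[OF m] \<delta>
    by (intro minimal_norm_pair_replicate_None) blast
qed

end
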